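(* For $\epsilon>0$ sufficiently small (depending on $A_1,A_2$), for every $t\in[0,1]$ the curve $C_t=p_t^{-1}(0)\subset\mathbb{CP}^2$, where $$p_t(x)=\gamma_{\epsilon,t}\Big(\frac{r_1^2}{\eta_1^2}\Big)x_1+\gamma_{\epsilon,t}\Big(\frac{r_2^2}{\eta_2^2}\Big)x_2+\gamma_{\epsilon,t}\Big(\frac1{\eta_0^2}\Big),$$ is a symplectic curve for $\omega_{FS}$. Thus $\{C_t\}_{t\in[0,1]}$ is a symplectic isotopy from the line $\{x_1+x_2+1=0\}$ to $C_1=\{\gamma_\epsilon(r_1^2/\eta_1^2)x_1+\gamma_\epsilon(r_2^2/\eta_2^2)x_2+\gamma_\epsilon(1/\eta_0^2)=0\}$.
   Context: On $\mathbb{CP}^2$, affine coordinates $x_k=z_k/z_0=r_ke^{i\theta_k}$, $\omega_{FS}=i\partial\bar\partial\log(1+|x_1|^2+|x_2|^2)$. $\eta_1=\max(1,r_2)$, $\eta_2=\max(1,r_1)$, $\eta_0=\max(r_1,r_2)$. Fix constants $1<A_1<A_2$; $\gamma_\epsilon:[0,\infty)\to[0,1]$ is smooth, non-decreasing, with $\gamma_\epsilon(u)=0$ for $\sqrt u\le A_1\epsilon$ and $\gamma_\epsilon(u)=1$ for $\sqrt u\ge A_2\epsilon$; $\gamma_{\epsilon,t}=t\gamma_\epsilon+(1-t)$. (The curves are understood as the closures in $\mathbb{CP}^2$ of the zero sets, defined symmetrically in the three affine charts.) *)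

theory Defs
  imports "HOL-Analysis.Analysis"
begin

text \<open>Admissible cutoff functions gamma_eps (extended by 0 to negative reals,
  which is harmless since gamma_eps vanishes near 0).\<close>
definition cutoff :: "real \<Rightarrow> real \<Rightarrow> real \<Rightarrow> (real \<Rightarrow> real) \<Rightarrow> bool" where
  "cutoff A1 A2 \<epsilon> \<gamma> \<longleftrightarrow>
     (\<forall>n u. ((deriv ^^ n) \<gamma> has_real_derivative (deriv ^^ Suc n) \<gamma> u) (at u)) \<and>
     (\<forall>u\<ge>0. 0 \<le> \<gamma> u \<and> \<gamma> u \<le> 1) \<and>
     (\<forall>u v. 0 \<le> u \<longrightarrow> u \<le> v \<longrightarrow> \<gamma> u \<le> \<gamma> v) \<and>
     (\<forall>u\<ge>0. sqrt u \<le> A1 * \<epsilon> \<longrightarrow> \<gamma> u = 0) \<and>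
     (\<forall>u\<ge>0. A2 * \<epsilon> \<le> sqrt u \<longrightarrow> \<gamma> u = 1)"

definition gam_t :: "(real \<Rightarrow> real) \<Rightarrow> real \<Rightarrow> real \<Rightarrow> real" where
  "gam_t \<gamma> t u = t * \<gamma> u + (1 - t)"

text \<open>gamma_{eps,t}(a/b), with the value at a/0 = +infinity being gamma_{eps,t}(infinity) = 1.\<close>
definition Gt :: "(real \<Rightarrow> real) \<Rightarrow> real \<Rightarrow> real \<Rightarrow> real \<Rightarrow> real" where
  "Gt \<gamma> t a b = (if b = 0 then 1 else gam_t \<gamma> t (a / b))"

text \<open>In the chart z0 = 1 this is exactly the p_t of the paper
  (r1^2/eta1^2, r2^2/eta2^2, 1/eta0^2); it is symmetric in the three charts.\<close>
definition Pt :: "(real \<Rightarrow> real) \<Rightarrow> real \<Rightarrow> complex \<times> complex \<times> complex \<Rightarrow> complex" where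
  "Pt \<gamma> t w = (case w of (w0, w1, w2) \<Rightarrow>
      complex_of_real (Gt \<gamma> t ((cmod w1)\<^sup>2) (max ((cmod w0)\<^sup>2) ((cmod w2)\<^sup>2))) * w1
    + complex_of_real (Gt \<gamma> t ((cmod w2)\<^sup>2) (max ((cmod w0)\<^sup>2) ((cmod w1)\<^sup>2))) * w2
    + complex_of_real (Gt \<gamma> t ((cmod w0)\<^sup>2) (max ((cmod w1)\<^sup>2) ((cmod w2)\<^sup>2))) * w0)"

text \<open>Smooth branches of p_t: each max(a,b) is replaced by one of a, b
  (s = True selects the first).  A branch is active at w if each selected
  value equals the corresponding max.  p_t is piecewise given by its branches.\<close>
definition sel :: "bool \<Rightarrow> real \<Rightarrow> real \<Rightarrow> real" where
  "sel s a b = (if s then a else b)"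

definition Pbranch :: "(real \<Rightarrow> real) \<Rightarrow> real \<Rightarrow> bool \<Rightarrow> bool \<Rightarrow> bool \<Rightarrow>
    complex \<times> complex \<times> complex \<Rightarrow> complex" where
  "Pbranch \<gamma> t s0 s1 s2 w = (case w of (w0, w1, w2) \<Rightarrow>
      complex_of_real (Gt \<gamma> t ((cmod w1)\<^sup>2) (sel s1 ((cmod w0)\<^sup>2) ((cmod w2)\<^sup>2))) * w1
    + complex_of_real (Gt \<gamma> t ((cmod w2)\<^sup>2) (sel s2 ((cmod w0)\<^sup>2) ((cmod w1)\<^sup>2))) * w2
    + complex_of_real (Gt \<gamma> t ((cmod w0)\<^sup>2) (sel s0 ((cmod w1)\<^sup>2) ((cmod w2)\<^sup>2))) * w0)"

definition branch_active :: "bool \<Rightarrow> bool \<Rightarrow> bool \<Rightarrow> complex \<times> complex \<times> complex \<Rightarrow> bool" where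
  "branch_active s0 s1 s2 w = (case w of (w0, w1, w2) \<Rightarrow>
      sel s1 ((cmod w0)\<^sup>2) ((cmod w2)\<^sup>2) = max ((cmod w0)\<^sup>2) ((cmod w2)\<^sup>2) \<and>
      sel s2 ((cmod w0)\<^sup>2) ((cmod w1)\<^sup>2) = max ((cmod w0)\<^sup>2) ((cmod w1)\<^sup>2) \<and>
      sel s0 ((cmod w1)\<^sup>2) ((cmod w2)\<^sup>2) = max ((cmod w1)\<^sup>2) ((cmod w2)\<^sup>2))"

definition chart :: "nat \<Rightarrow> complex \<times> complex \<Rightarrow> complex \<times> complex \<times> complex" where
  "chart k x = (case x of (a, b) \<Rightarrow>
      (if k = 0 then (1, a, b) else if k = 1 then (a, 1, b) else (a, b, 1)))"

text \<open>Fubini-Study form i del delbar log(1+|x|^2) in affine coordinates: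
  with h_{j kbar} = delta_{jk}/(1+|x|^2) - xbar_j x_k/(1+|x|^2)^2 and
  H(u,v) = sum h_{j kbar} u_j vbar_k one has omega(u,v) = i(H(u,v) - H(v,u)) = -2 Im H(u,v).\<close>
definition herm_FS :: "complex \<times> complex \<Rightarrow> complex \<times> complex \<Rightarrow> complex \<times> complex \<Rightarrow> complex" where
  "herm_FS x u v = (case x of (x1, x2) \<Rightarrow> case u of (u1, u2) \<Rightarrow> case v of (v1, v2) \<Rightarrow>
     let N = complex_of_real (1 + (cmod x1)\<^sup>2 + (cmod x2)\<^sup>2) in
     (u1 * cnj v1 + u2 * cnj v2) / N
       - (cnj x1 * u1 + cnj x2 * u2) * (x1 * cnj v1 + x2 * cnj v2) / N\<^sup>2)"

definition omega_FS :: "complex \<times> complex \<Rightarrow> complex \<times> complex \<Rightarrow> complex \<times> complex \<Rightarrow> real" where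
  "omega_FS x u v = - 2 * Im (herm_FS x u v)"

definition nondeg_on :: "complex \<times> complex \<Rightarrow> (complex \<times> complex) set \<Rightarrow> bool" where
  "nondeg_on x V \<longleftrightarrow> (\<forall>u\<in>V. u \<noteq> 0 \<longrightarrow> (\<exists>v\<in>V. omega_FS x u v \<noteq> 0))"

text \<open>C_t (in chart k) is a (piecewise smooth) symplectic curve for omega_FS:
  at every point of C_t and for every smooth branch of p_t active there, the
  real differential of the branch is surjective (so C_t is cut out transversally)
  and omega_FS is nondegenerate on its kernel, the tangent plane.\<close>
definition symplectic_curve_chart :: "(real \<Rightarrow> real) \<Rightarrow> real \<Rightarrow> nat \<Rightarrow> bool" where
  "symplectic_curve_chart \<gamma> t k \<longleftrightarrow>
     (\<forall>x. Pt \<gamma> t (chart k x) = 0 \<longrightarrow>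
        (\<forall>s0 s1 s2. branch_active s0 s1 s2 (chart k x) \<longrightarrow>
           (\<exists>D. ((\<lambda>y. Pbranch \<gamma> t s0 s1 s2 (chart k y)) has_derivative D) (at x)
                \<and> surj D \<and> nondeg_on x {v. D v = 0})))"

end

theory Submission
  imports Defs
begin

text \<open>
  Let \<open>W\<close> be homogeneous coordinates of a zero of an active smooth branch of \<open>p\<^sub>t\<close>, and
  \<open>M\<^sub>m\<close> the larger of the squared moduli of the two coordinates other than \<open>W\<^sub>m\<close>.
  The branch is \<open>\<Sum> c\<^sub>m W\<^sub>m\<close> with \<open>c\<^sub>m = gam_t \<gamma> t (|W\<^sub>m|\<^sup>2 / M\<^sub>m) \<in> [0, 1]\<close>; the
  cutoff varies only where \<open>|W\<^sub>m|\<^sup>2 < (A\<^sub>2 \<epsilon>)\<^sup>2 M\<^sub>m\<close>, and the largest coordinate has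
  \<open>c = 1\<close>.  For \<open>A\<^sub>2 \<epsilon> < 1/2\<close> the relation \<open>\<Sum> c\<^sub>m W\<^sub>m = 0\<close> bounds the largest
  coordinate by the sum of the other two, so at most one coordinate \<open>i\<close> lies in the
  transition region of the cutoff.

  Hence the real differential of the branch is \<open>\<Sum> A\<^sub>n dW\<^sub>n + B\<^sub>n d(cnj W\<^sub>n)\<close> with
  \<open>A \<cdot> W = 0 = B \<cdot> cnj W\<close>, where only the entries \<open>i\<close> and \<open>l\<close> (the coordinate
  realising \<open>M\<^sub>i\<close>) differ from \<open>A = c\<close>, \<open>B = 0\<close>.  A direct computation gives
  \<open>|A|\<^sup>2 - |B|\<^sup>2 = \<Sum> c\<^sub>m\<^sup>2 + 2 e |W\<^sub>i|\<^sup>2 (c\<^sub>i |W\<^sub>l|\<^sup>2 - c\<^sub>l Re (W\<^sub>i cnj W\<^sub>l))\<close> with \<open>e \<ge> 0\<close>,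
  which is positive: some \<open>c\<^sub>m = 1\<close>, and the zero relation forces
  \<open>Re (W\<^sub>i cnj W\<^sub>l) \<le> 0\<close>.  Finally, a real-linear form with \<open>|A| \<noteq> |B|\<close> is onto, and
  its kernel is a symplectic plane for \<open>\<omega>\<^sub>F\<^sub>S\<close>: it has an \<open>\<omega>\<^sub>F\<^sub>S\<close>-orthogonal complement,
  and \<open>\<omega>\<^sub>F\<^sub>S(u, \<i> u) > 0\<close>.
\<close>


section \<open>Cutoff functions\<close>

lemma cutoffD:
  assumes "cutoff A1 A2 \<epsilon> \<gamma>"
  shows cutoff_has_real_derivative: "(\<gamma> has_real_derivative deriv \<gamma> u) (at u)"
    and cutoff_range: "0 \<le> v \<Longrightarrow> 0 \<le> \<gamma> v \<and> \<gamma> v \<le> 1"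
    and cutoff_mono: "0 \<le> v \<Longrightarrow> v \<le> v' \<Longrightarrow> \<gamma> v \<le> \<gamma> v'"
    and cutoff_eq_1_sqrt: "0 \<le> v \<Longrightarrow> A2 * \<epsilon> \<le> sqrt v \<Longrightarrow> \<gamma> v = 1"
proof -
  have "\<And>n u. ((deriv ^^ n) \<gamma> has_real_derivative (deriv ^^ Suc n) \<gamma> u) (at u)"
    using assms unfolding cutoff_def by auto
  from this[of 0] show "(\<gamma> has_real_derivative deriv \<gamma> u) (at u)" by simp
qed (use assms in \<open>auto simp: cutoff_def\<close>)

lemma cutoff_eq_1:
  assumes "cutoff A1 A2 \<epsilon> \<gamma>" and "0 \<le> A2 * \<epsilon>" and "(A2 * \<epsilon>)\<^sup>2 \<le> u"
  shows "\<gamma> u = 1"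
proof -
  have "0 \<le> u" using assms(3) order_trans zero_le_power2 by blast
  moreover have "A2 * \<epsilon> \<le> sqrt u" using assms(2,3) by (simp add: real_le_rsqrt)
  ultimately show ?thesis using cutoff_eq_1_sqrt[OF assms(1)] by blast
qed

lemma cutoff_deriv_nonneg:
  assumes "cutoff A1 A2 \<epsilon> \<gamma>" and "0 < u"
  shows "0 \<le> deriv \<gamma> u"
proof (rule ccontr)
  assume "\<not> 0 \<le> deriv \<gamma> u"
  then obtain d where "0 < d" and dec: "\<And>h. 0 < h \<Longrightarrow> h < d \<Longrightarrow> \<gamma> (u + h) < \<gamma> u"
    using DERIV_neg_dec_right[OF cutoff_has_real_derivative[OF assms(1)]] by (meson not_le)
  define h where "h = d / 2"
  have "0 < h" "\<gamma> (u + h) < \<gamma> u" using \<open>0 < d\<close> dec unfolding h_def by auto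
  moreover have "\<gamma> u \<le> \<gamma> (u + h)" using cutoff_mono[OF assms(1)] assms(2) \<open>0 < h\<close> by simp
  ultimately show False by simp
qed

lemma cutoff_deriv_eq_0:
  assumes cutoff: "cutoff A1 A2 \<epsilon> \<gamma>" and "0 < u" and "\<gamma> u = 0 \<or> \<gamma> u = 1"
  shows "deriv \<gamma> u = 0"
proof -
  have near: "0 \<le> \<gamma> y \<and> \<gamma> y \<le> 1" if "\<bar>u - y\<bar> < u" for y
    using that cutoff_range[OF cutoff, of y] by simp
  note \<gamma>' = cutoff_has_real_derivative[OF cutoff]
  from assms(3) show ?thesis
  proof
    assume "\<gamma> u = 0"
    with near show ?thesis by (intro DERIV_local_min[OF \<gamma>' \<open>0 < u\<close>]) simp
  next
    assume "\<gamma> u = 1"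
    with near show ?thesis by (intro DERIV_local_max[OF \<gamma>' \<open>0 < u\<close>]) simp
  qed
qed

lemma gam_t_range:
  assumes "cutoff A1 A2 \<epsilon> \<gamma>" and "0 \<le> t" "t \<le> 1" and "0 \<le> u"
  shows "0 \<le> gam_t \<gamma> t u \<and> gam_t \<gamma> t u \<le> 1"
proof -
  have "0 \<le> \<gamma> u" "\<gamma> u \<le> 1" using cutoff_range[OF assms(1,4)] by auto
  then have "0 \<le> t * \<gamma> u" "t * \<gamma> u \<le> t" using assms(2,3) mult_left_le by auto
  then show ?thesis unfolding gam_t_def using assms(2,3) by auto
qed

lemma gam_t_eq_1:
  assumes "cutoff A1 A2 \<epsilon> \<gamma>" and "0 \<le> A2 * \<epsilon>" and "(A2 * \<epsilon>)\<^sup>2 \<le> u"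
  shows "gam_t \<gamma> t u = 1"
  using cutoff_eq_1[OF assms] by (simp add: gam_t_def)

lemma cutoff_deriv_ne_0_imp_less:
  assumes "cutoff A1 A2 \<epsilon> \<gamma>" and "0 \<le> A2 * \<epsilon>" and "0 < u" and "deriv \<gamma> u \<noteq> 0"
  shows "u < (A2 * \<epsilon>)\<^sup>2"
  using cutoff_eq_1[OF assms(1,2)] cutoff_deriv_eq_0[OF assms(1,3)] assms(4) by force

lemma gam_t_pos_if_deriv_ne_0:
  assumes "cutoff A1 A2 \<epsilon> \<gamma>" and "0 \<le> t" "t \<le> 1" and "0 < u" and "deriv \<gamma> u \<noteq> 0"
  shows "0 < gam_t \<gamma> t u"
proof -
  have "0 < \<gamma> u"
    using cutoff_range[of A1 A2 \<epsilon> \<gamma> u] cutoff_deriv_eq_0[of A1 A2 \<epsilon> \<gamma> u] assms by force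
  then show ?thesis unfolding gam_t_def using assms(2,3)
    by (cases "t = 0") (auto intro: add_pos_nonneg)
qed

section \<open>The Fubini-Study form\<close>

lemma of_real_cmod_power2: "(complex_of_real (cmod z))\<^sup>2 = z * cnj z"
  using complex_norm_square[of z] by simp

lemma of_real_Re: "complex_of_real (Re z) = (z + cnj z) / 2"
  by (simp add: complex_add_cnj)

lemma herm_FS_add_right: "herm_FS x u (v + w) = herm_FS x u v + herm_FS x u w"
  by (cases x; cases u; cases v; cases w) (simp add: herm_FS_def Let_def divide_inverse algebra_simps)

lemma omega_FS_add_right: "omega_FS x u (v + w) = omega_FS x u v + omega_FS x u w"
  by (simp add: omega_FS_def herm_FS_add_right algebra_simps)

lemma herm_FS_mult_right:
  "herm_FS x (u1, u2) (c * v1, c * v2) = cnj c * herm_FS x (u1, u2) (v1, v2)"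
  by (cases x) (simp add: herm_FS_def Let_def divide_inverse algebra_simps)

lemma FS_weight_eq:
  "complex_of_real (1 + (cmod x1)\<^sup>2 + (cmod x2)\<^sup>2) = 1 + x1 * cnj x1 + x2 * cnj x2"
  by (simp only: of_real_add of_real_1 complex_norm_square)

lemma FS_weight_nonzero: "1 + x1 * cnj x1 + x2 * cnj x2 \<noteq> 0"
proof -
  have "0 < 1 + (cmod x1)\<^sup>2 + (cmod x2)\<^sup>2" by (simp add: add_pos_nonneg)
  then show ?thesis unfolding FS_weight_eq[symmetric] of_real_eq_0_iff by simp
qed

lemma herm_FS_eq:
  "herm_FS (x1, x2) (u1, u2) (v1, v2) =
     (u1 * cnj v1 + u2 * cnj v2) / (1 + x1 * cnj x1 + x2 * cnj x2)
   - (cnj x1 * u1 + cnj x2 * u2) * (x1 * cnj v1 + x2 * cnj v2) / (1 + x1 * cnj x1 + x2 * cnj x2)\<^sup>2"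
  unfolding herm_FS_def Let_def prod.case FS_weight_eq ..

lemma lagrange_identity_complex:
  fixes x1 x2 u1 u2 :: complex
  shows "((cmod x1)\<^sup>2 + (cmod x2)\<^sup>2) * ((cmod u1)\<^sup>2 + (cmod u2)\<^sup>2)
     = (cmod (cnj x1 * u1 + cnj x2 * u2))\<^sup>2 + (cmod (x2 * u1 - x1 * u2))\<^sup>2"
proof -
  have "complex_of_real (((cmod x1)\<^sup>2 + (cmod x2)\<^sup>2) * ((cmod u1)\<^sup>2 + (cmod u2)\<^sup>2))
     = complex_of_real ((cmod (cnj x1 * u1 + cnj x2 * u2))\<^sup>2 + (cmod (x2 * u1 - x1 * u2))\<^sup>2)"
    unfolding of_real_add of_real_mult complex_norm_square by (simp add: algebra_simps)
  then show ?thesis using of_real_eq_iff by blast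
qed

lemma omega_FS_mult_i_pos:
  fixes x1 x2 u1 u2 :: complex
  assumes "(u1, u2) \<noteq> 0"
  shows "0 < omega_FS (x1, x2) (u1, u2) (\<i> * u1, \<i> * u2)"
proof -
  define N where "N = 1 + (cmod x1)\<^sup>2 + (cmod x2)\<^sup>2"
  define S where "S = (cmod u1)\<^sup>2 + (cmod u2)\<^sup>2"
  define P where "P = (cmod (cnj x1 * u1 + cnj x2 * u2))\<^sup>2"
  have "0 < N" unfolding N_def by (simp add: add_pos_nonneg)
  have "0 < S" using assms unfolding S_def zero_prod_def
    by (cases "u1 = 0") (auto intro: add_pos_nonneg)
  have "P \<le> (N - 1) * S"
    unfolding P_def S_def N_def using lagrange_identity_complex[of x1 x2 u1 u2] by simp
  then have "P / N\<^sup>2 < S / N"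
    using \<open>0 < N\<close> \<open>0 < S\<close> by (simp add: field_simps power2_eq_square)
  have "herm_FS (x1, x2) (u1, u2) (u1, u2) = complex_of_real (S / N - P / N\<^sup>2)"
    unfolding herm_FS_eq FS_weight_eq[symmetric] N_def[symmetric]
    by (simp add: S_def P_def of_real_cmod_power2)
  then have "omega_FS (x1, x2) (u1, u2) (\<i> * u1, \<i> * u2) = 2 * (S / N - P / N\<^sup>2)"
    using herm_FS_mult_right[of "(x1, x2)" u1 u2 \<i> u1 u2] by (simp add: omega_FS_def)
  with \<open>P / N\<^sup>2 < S / N\<close> show ?thesis by simp
qed

text \<open>\<open>Y z\<close> is \<open>z cnj a - cnj z b\<close> transported by \<open>N (I + x x\<^sup>*)\<close>, the inverse of the
  Fubini-Study metric; this makes its image \<open>\<omega>\<close>-orthogonal to \<open>ker D\<close>.\<close>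
lemma real_linear_form_orthogonal_section:
  fixes a1 a2 b1 b2 x1 x2 :: complex and D :: "complex \<times> complex \<Rightarrow> complex"
  assumes D: "\<And>u1 u2. D (u1, u2) = a1 * u1 + a2 * u2 + b1 * cnj u1 + b2 * cnj u2"
    and norms_ne: "(cmod (a1 * x1 + a2 * x2))\<^sup>2 + (cmod a1)\<^sup>2 + (cmod a2)\<^sup>2 \<noteq>
                   (cmod (b1 * cnj x1 + b2 * cnj x2))\<^sup>2 + (cmod b1)\<^sup>2 + (cmod b2)\<^sup>2"
  obtains Y where "\<And>z. D (Y z) = z" and "\<And>u z. D u = 0 \<Longrightarrow> omega_FS (x1, x2) u (Y z) = 0"
proof -
  define N where "N = 1 + x1 * cnj x1 + x2 * cnj x2"
  have "N \<noteq> 0" unfolding N_def by (rule FS_weight_nonzero)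
  define a0 where "a0 = - (a1 * x1 + a2 * x2)"
  define b0 where "b0 = - (b1 * cnj x1 + b2 * cnj x2)"
  define \<Delta> where "\<Delta> = a0 * cnj a0 + a1 * cnj a1 + a2 * cnj a2 - b0 * cnj b0 - b1 * cnj b1 - b2 * cnj b2"
  have "\<Delta> \<noteq> 0"
  proof -
    have "\<Delta> = complex_of_real ((cmod (a1 * x1 + a2 * x2))\<^sup>2 + (cmod a1)\<^sup>2 + (cmod a2)\<^sup>2 -
          ((cmod (b1 * cnj x1 + b2 * cnj x2))\<^sup>2 + (cmod b1)\<^sup>2 + (cmod b2)\<^sup>2))"
      unfolding \<Delta>_def a0_def b0_def of_real_add of_real_diff complex_norm_square
      by (simp add: algebra_simps)
    with norms_ne show ?thesis by (metis of_real_eq_0_iff right_minus_eq)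
  qed
  define Y where "Y z = (N * ((cnj a1 - x1 * cnj a0) * z - (b1 - x1 * b0) * cnj z),
                         N * ((cnj a2 - x2 * cnj a0) * z - (b2 - x2 * b0) * cnj z))" for z
  have D_Y: "D (Y z) = N * \<Delta> * z" for z
    unfolding Y_def D \<Delta>_def N_def a0_def b0_def by (simp add: algebra_simps)
  have omega_Y: "omega_FS (x1, x2) u (Y z) = 0" if "D u = 0" for u z
  proof -
    obtain u1 u2 where u: "u = (u1, u2)" by (cases u)
    define \<beta> where "\<beta> = b1 * cnj u1 + b2 * cnj u2"
    have "a1 * u1 + a2 * u2 = - \<beta>"
      using that unfolding u D \<beta>_def by (simp add: eq_neg_iff_add_eq_0 algebra_simps)
    moreover have "cnj b1 * u1 + cnj b2 * u2 = cnj \<beta>" unfolding \<beta>_def by simp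
    moreover have "herm_FS (x1, x2) (u1, u2) (Y z)
        = cnj z * (a1 * u1 + a2 * u2) - z * (cnj b1 * u1 + cnj b2 * u2)"
      unfolding Y_def herm_FS_eq N_def[symmetric] using \<open>N \<noteq> 0\<close>
      by (simp add: field_simps power2_eq_square) (simp add: N_def a0_def b0_def algebra_simps)
    ultimately have "herm_FS (x1, x2) u (Y z) = - (cnj z * \<beta> + cnj (cnj z * \<beta>))"
      unfolding u by simp
    then show ?thesis unfolding omega_FS_def by (simp del: complex_cnj_mult)
  qed
  show ?thesis
    by (rule that[of "\<lambda>z. Y (z / (N * \<Delta>))"]) (use D_Y omega_Y \<open>N \<noteq> 0\<close> \<open>\<Delta> \<noteq> 0\<close> in simp_all)
qed

text \<open>Projecting \<open>\<i> u\<close> along the image of \<open>Y\<close> gives a kernel vector \<open>v\<close> with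
  \<open>\<omega>(u, v) = \<omega>(u, \<i> u) > 0\<close>.\<close>
lemma surj_nondeg_kernel_affine:
  fixes a1 a2 b1 b2 x1 x2 :: complex and D :: "complex \<times> complex \<Rightarrow> complex"
  assumes D: "\<And>u1 u2. D (u1, u2) = a1 * u1 + a2 * u2 + b1 * cnj u1 + b2 * cnj u2"
    and norms_ne: "(cmod (a1 * x1 + a2 * x2))\<^sup>2 + (cmod a1)\<^sup>2 + (cmod a2)\<^sup>2 \<noteq>
                   (cmod (b1 * cnj x1 + b2 * cnj x2))\<^sup>2 + (cmod b1)\<^sup>2 + (cmod b2)\<^sup>2"
  shows "surj D \<and> nondeg_on (x1, x2) {v. D v = 0}"
proof -
  obtain Y where D_Y: "\<And>z. D (Y z) = z"
    and omega_Y: "\<And>u z. D u = 0 \<Longrightarrow> omega_FS (x1, x2) u (Y z) = 0"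
    using real_linear_form_orthogonal_section[OF D norms_ne] by blast
  have D_add: "D (p + q) = D p + D q" for p q
    by (cases p; cases q) (simp add: D algebra_simps)
  have "surj D" unfolding surj_def by (metis D_Y)
  moreover have "nondeg_on (x1, x2) {v. D v = 0}"
    unfolding nondeg_on_def
  proof (intro ballI impI)
    fix u assume "u \<in> {v. D v = 0}" and "u \<noteq> 0"
    obtain u1 u2 where u: "u = (u1, u2)" by (cases u)
    define v where "v = (\<i> * u1, \<i> * u2) + Y (- D (\<i> * u1, \<i> * u2))"
    have "D v = 0" unfolding v_def D_add D_Y by simp
    moreover have "omega_FS (x1, x2) u v = omega_FS (x1, x2) u (\<i> * u1, \<i> * u2)"
      unfolding v_def omega_FS_add_right using omega_Y \<open>u \<in> {v. D v = 0}\<close> by simp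
    moreover have "0 < omega_FS (x1, x2) u (\<i> * u1, \<i> * u2)"
      using omega_FS_mult_i_pos \<open>u \<noteq> 0\<close> unfolding u by blast
    ultimately show "\<exists>v\<in>{v. D v = 0}. omega_FS (x1, x2) u v \<noteq> 0"
      by (intro bexI[of _ v]) auto
  qed
  ultimately show ?thesis by simp
qed

definition hcoord :: "complex \<times> complex \<times> complex \<Rightarrow> nat \<Rightarrow> complex" where
  "hcoord w m = (case w of (w0, w1, w2) \<Rightarrow> if m = 0 then w0 else if m = 1 then w1 else w2)"

definition other1 :: "nat \<Rightarrow> nat" where
  "other1 m = (if m = 0 then 1 else 0)"

definition other2 :: "nat \<Rightarrow> nat" where
  "other2 m = (if m = 2 then 1 else 2)"

definition max_others :: "complex \<times> complex \<times> complex \<Rightarrow> nat \<Rightarrow> real" where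
  "max_others w m = max ((cmod (hcoord w (other1 m)))\<^sup>2) ((cmod (hcoord w (other2 m)))\<^sup>2)"

definition branch_index :: "bool \<Rightarrow> bool \<Rightarrow> bool \<Rightarrow> nat \<Rightarrow> nat" where
  "branch_index s0 s1 s2 m =
     (if (if m = 0 then s0 else if m = 1 then s1 else s2) then other1 m else other2 m)"

definition chart_tangent :: "nat \<Rightarrow> complex \<times> complex \<Rightarrow> nat \<Rightarrow> complex" where
  "chart_tangent k u m = (if m = k then 0 else if m = other1 k then fst u else snd u)"

definition perm3 :: "nat \<Rightarrow> nat \<Rightarrow> nat \<Rightarrow> bool" where
  "perm3 i j l \<longleftrightarrow> i < 3 \<and> j < 3 \<and> l < 3 \<and> i \<noteq> j \<and> i \<noteq> l \<and> j \<noteq> l"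

lemma less_3_cases: "(m::nat) < 3 \<longleftrightarrow> m = 0 \<or> m = 1 \<or> m = 2"
  by auto

lemma all_less_3: "(\<forall>m<3. P m) \<longleftrightarrow> P 0 \<and> P 1 \<and> P (2::nat)"
  unfolding less_3_cases by auto

lemma sum_lessThan_3: "(\<Sum>m<3. f m) = f 0 + f 1 + f (2::nat)"
  by (simp add: numeral_3_eq_3 numeral_2_eq_2 lessThan_Suc add_ac)

lemma sum_lessThan_3_perm3: "perm3 i j l \<Longrightarrow> (\<Sum>m<3. f m) = f i + f j + f l"
  unfolding perm3_def less_3_cases sum_lessThan_3 by (elim conjE disjE) (simp_all add: add_ac)

lemma perm3_mem: "perm3 i j l \<Longrightarrow> m < 3 \<Longrightarrow> m = i \<or> m = j \<or> m = l"
  unfolding perm3_def less_3_cases by auto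

lemma perm3_third: "i < 3 \<Longrightarrow> j < 3 \<Longrightarrow> i \<noteq> j \<Longrightarrow> perm3 i j (3 - i - j)"
  unfolding perm3_def less_3_cases by auto

lemma perm3_others: "k < 3 \<Longrightarrow> perm3 k (other1 k) (other2 k)"
  unfolding perm3_def less_3_cases by (auto simp: other1_def other2_def)

lemma branch_index_less_3: "m < 3 \<Longrightarrow> branch_index s0 s1 s2 m < 3"
  and branch_index_neq: "branch_index s0 s1 s2 m \<noteq> m"
  by (auto simp: branch_index_def other1_def other2_def)

lemma max_others_perm3:
  "perm3 i j l \<Longrightarrow> max_others w i = max ((cmod (hcoord w j))\<^sup>2) ((cmod (hcoord w l))\<^sup>2)"
  unfolding perm3_def less_3_cases max_others_def other1_def other2_def
  by (elim conjE disjE) (simp_all add: max.commute)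

lemma max_others_nonneg: "0 \<le> max_others w m"
  by (simp add: max_others_def le_max_iff_disj)

lemma Pt_eq_sum:
  "Pt \<gamma> t w = (\<Sum>m<3. complex_of_real (Gt \<gamma> t ((cmod (hcoord w m))\<^sup>2) (max_others w m)) * hcoord w m)"
  by (cases w) (simp add: sum_lessThan_3 Pt_def hcoord_def max_others_def other1_def other2_def add_ac)

lemma Pbranch_eq_sum:
  "Pbranch \<gamma> t s0 s1 s2 w = (\<Sum>m<3. complex_of_real (Gt \<gamma> t ((cmod (hcoord w m))\<^sup>2)
      ((cmod (hcoord w (branch_index s0 s1 s2 m)))\<^sup>2)) * hcoord w m)"
  by (cases w; cases s0; cases s1; cases s2)
    (simp_all add: sum_lessThan_3 Pbranch_def sel_def hcoord_def branch_index_def other1_def other2_def add_ac)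

lemma branch_active_iff:
  "branch_active s0 s1 s2 w \<longleftrightarrow>
     (\<forall>m<3. (cmod (hcoord w (branch_index s0 s1 s2 m)))\<^sup>2 = max_others w m)"
  unfolding all_less_3
  by (cases w; cases s0; cases s1; cases s2)
    (simp_all add: branch_active_def sel_def hcoord_def branch_index_def other1_def other2_def
      max_others_def conj_ac)

lemma hcoord_chart:
  "k < 3 \<Longrightarrow> m < 3 \<Longrightarrow> hcoord (chart k y) m = (if m = k then 1 else chart_tangent k y m)"
  unfolding less_3_cases by (cases y) (auto simp: hcoord_def chart_def chart_tangent_def other1_def)

lemma hcoord_chart_has_derivative:
  assumes "k < 3" "m < 3"
  shows "((\<lambda>y. hcoord (chart k y) m) has_derivative (\<lambda>u. chart_tangent k u m)) (at x)"
proof -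
  have "bounded_linear (\<lambda>u. chart_tangent k u m)"
    unfolding chart_tangent_def
    by (cases "m = k"; cases "m = other1 k") (simp_all add: bounded_linear_fst bounded_linear_snd)
  then show ?thesis
    using hcoord_chart[OF assms] chart_tangent_def
    by (cases "m = k") (simp_all add: bounded_linear_imp_has_derivative)
qed

lemma surj_nondeg_kernel:
  fixes A B :: "nat \<Rightarrow> complex" and D :: "complex \<times> complex \<Rightarrow> complex"
  assumes k: "k < 3"
    and D: "\<And>u. D u = (\<Sum>n<3. A n * chart_tangent k u n + B n * cnj (chart_tangent k u n))"
    and A_orth: "(\<Sum>n<3. A n * hcoord (chart k x) n) = 0"
    and B_orth: "(\<Sum>n<3. B n * cnj (hcoord (chart k x) n)) = 0"
    and norms_ne: "(\<Sum>n<3. (cmod (A n))\<^sup>2) \<noteq> (\<Sum>n<3. (cmod (B n))\<^sup>2)"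
  shows "surj D \<and> nondeg_on x {v. D v = 0}"
proof -
  obtain x1 x2 where x: "x = (x1, x2)" by (cases x)
  note perm = perm3_others[OF k]
  note sum_perm = sum_lessThan_3_perm3[OF perm]
  have tangent: "chart_tangent k u k = 0" "chart_tangent k u (other1 k) = fst u"
      "chart_tangent k u (other2 k) = snd u" for u
    using perm unfolding perm3_def chart_tangent_def by auto
  have coord: "hcoord (chart k x) k = 1" "hcoord (chart k x) (other1 k) = x1"
      "hcoord (chart k x) (other2 k) = x2"
    using perm hcoord_chart[OF k] tangent unfolding perm3_def x by auto
  have A_k: "A k = - (A (other1 k) * x1 + A (other2 k) * x2)"
    using A_orth unfolding sum_perm coord eq_neg_iff_add_eq_0 by (simp add: add.assoc)
  have B_k: "B k = - (B (other1 k) * cnj x1 + B (other2 k) * cnj x2)"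
    using B_orth unfolding sum_perm coord eq_neg_iff_add_eq_0 by (simp add: add.assoc)
  show ?thesis unfolding x
  proof (rule surj_nondeg_kernel_affine)
    show "D (u1, u2) = A (other1 k) * u1 + A (other2 k) * u2
        + B (other1 k) * cnj u1 + B (other2 k) * cnj u2" for u1 u2
      unfolding D sum_perm tangent by (simp add: algebra_simps)
    show "(cmod (A (other1 k) * x1 + A (other2 k) * x2))\<^sup>2 + (cmod (A (other1 k)))\<^sup>2
        + (cmod (A (other2 k)))\<^sup>2 \<noteq> (cmod (B (other1 k) * cnj x1 + B (other2 k) * cnj x2))\<^sup>2
        + (cmod (B (other1 k)))\<^sup>2 + (cmod (B (other2 k)))\<^sup>2"
      using norms_ne unfolding sum_perm A_k B_k norm_minus_cancel by simp
  qed
qed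

section \<open>Differentiating a branch\<close>

lemma has_derivative_cmod_power2:
  fixes g :: "'a::real_normed_vector \<Rightarrow> complex"
  assumes "(g has_derivative G) (at x)"
  shows "((\<lambda>y. (cmod (g y))\<^sup>2) has_derivative (\<lambda>u. 2 * Re (cnj (g x) * G u))) (at x)"
proof -
  have eq: "(\<lambda>y. (cmod (g y))\<^sup>2) = (\<lambda>y. Re (g y) * Re (g y) + Im (g y) * Im (g y))"
    unfolding fun_eq_iff by (metis cmod_power2 power2_eq_square)
  have "((\<lambda>y. Re (g y) * Re (g y) + Im (g y) * Im (g y)) has_derivative
      (\<lambda>u. (Re (g x) * Re (G u) + Re (G u) * Re (g x)) + (Im (g x) * Im (G u) + Im (G u) * Im (g x)))) (at x)"
    using has_derivative_Re[OF assms] has_derivative_Im[OF assms]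
    by (intro has_derivative_add has_derivative_mult)
  then show ?thesis unfolding eq
    by (rule has_derivative_eq_rhs) (simp add: algebra_simps fun_eq_iff power2_eq_square)
qed

lemma has_derivative_Gt_mult:
  fixes f h :: "'a::real_normed_vector \<Rightarrow> complex"
  assumes \<gamma>: "\<And>v. (\<gamma> has_real_derivative deriv \<gamma> v) (at v)"
    and f: "(f has_derivative F) (at x)" and h: "(h has_derivative H) (at x)" and "h x \<noteq> 0"
  shows "((\<lambda>y. complex_of_real (Gt \<gamma> t ((cmod (f y))\<^sup>2) ((cmod (h y))\<^sup>2)) * f y) has_derivative
     (\<lambda>u. complex_of_real (gam_t \<gamma> t ((cmod (f x))\<^sup>2 / (cmod (h x))\<^sup>2)) * F u
        + f x * complex_of_real (t * deriv \<gamma> ((cmod (f x))\<^sup>2 / (cmod (h x))\<^sup>2) *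
           ((2 * Re (cnj (f x) * F u) * (cmod (h x))\<^sup>2 - (cmod (f x))\<^sup>2 * (2 * Re (cnj (h x) * H u)))
             / ((cmod (h x))\<^sup>2)\<^sup>2)))) (at x)"
proof -
  let ?q = "\<lambda>y. (cmod (f y))\<^sup>2 / (cmod (h y))\<^sup>2"
  let ?dq = "\<lambda>u. (2 * Re (cnj (f x) * F u) * (cmod (h x))\<^sup>2 - (cmod (f x))\<^sup>2 * (2 * Re (cnj (h x) * H u)))
             / ((cmod (h x))\<^sup>2)\<^sup>2"
  have "(cmod (h x))\<^sup>2 \<noteq> 0" using \<open>h x \<noteq> 0\<close> by simp
  with has_derivative_cmod_power2[OF f] has_derivative_cmod_power2[OF h]
  have q: "(?q has_derivative ?dq) (at x)"
    by (rule has_derivative_divide'[THEN has_derivative_eq_rhs]) (simp add: fun_eq_iff power2_eq_square)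
  have "(gam_t \<gamma> t has_real_derivative t * deriv \<gamma> v) (at v)" for v
    unfolding gam_t_def[abs_def] by (rule derivative_eq_intros \<gamma> | simp)+
  then have "(gam_t \<gamma> t has_derivative (\<lambda>u. t * deriv \<gamma> v * u)) (at v)" for v
    by (simp add: has_field_derivative_def)
  from has_derivative_compose[OF q this] have
    "((\<lambda>y. gam_t \<gamma> t (?q y)) has_derivative (\<lambda>u. t * deriv \<gamma> (?q x) * ?dq u)) (at x)" .
  from has_derivative_mult[OF has_derivative_of_real[OF this] f]
  have "((\<lambda>y. complex_of_real (gam_t \<gamma> t (?q y)) * f y) has_derivative
     (\<lambda>u. complex_of_real (gam_t \<gamma> t (?q x)) * F u
        + f x * complex_of_real (t * deriv \<gamma> (?q x) * ?dq u))) (at x)"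
    by (rule has_derivative_eq_rhs) (simp add: fun_eq_iff mult.commute mult.left_commute)
  moreover have "\<forall>\<^sub>F y in at x. h y \<noteq> 0"
    using has_derivative_continuous[OF h] \<open>h x \<noteq> 0\<close>
    by (simp add: continuous_at tendsto_imp_eventually_ne)
  then have "\<forall>\<^sub>F y in at x. complex_of_real (gam_t \<gamma> t (?q y)) * f y
      = complex_of_real (Gt \<gamma> t ((cmod (f y))\<^sup>2) ((cmod (h y))\<^sup>2)) * f y"
    by eventually_elim (simp add: Gt_def)
  ultimately show ?thesis
    by (rule has_derivative_transform_eventually) (use \<open>h x \<noteq> 0\<close> in \<open>simp_all add: Gt_def\<close>)
qed

section \<open>Zeros of a branch\<close>

lemma no_two_small_of_three:
  fixes a b c \<delta> :: real
  assumes "0 < \<delta>" "\<delta> < 1/2" and "0 \<le> a" "0 \<le> b" "0 \<le> c"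
    and a: "a\<^sup>2 < \<delta>\<^sup>2 * max (b\<^sup>2) (c\<^sup>2)" and b: "b\<^sup>2 < \<delta>\<^sup>2 * max (a\<^sup>2) (c\<^sup>2)"
    and c: "a\<^sup>2 \<le> c\<^sup>2 \<Longrightarrow> b\<^sup>2 \<le> c\<^sup>2 \<Longrightarrow> c \<le> a + b"
  shows False
proof -
  have "\<delta>\<^sup>2 < 1" using assms(1,2) by (simp add: power_less_one_iff abs_less_iff)
  then have shrink: "\<delta>\<^sup>2 * z \<le> z" if "0 \<le> z" for z
    using mult_right_mono[of "\<delta>\<^sup>2" 1 z] that by simp
  consider "c\<^sup>2 \<le> b\<^sup>2" | "c\<^sup>2 \<le> a\<^sup>2" | "a\<^sup>2 \<le> c\<^sup>2" "b\<^sup>2 \<le> c\<^sup>2" by linarith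
  then show False
  proof cases
    case 1
    with a have "a\<^sup>2 < b\<^sup>2" using shrink[of "b\<^sup>2"] by (simp add: max_def)
    with 1 have "\<delta>\<^sup>2 * max (a\<^sup>2) (c\<^sup>2) \<le> \<delta>\<^sup>2 * b\<^sup>2" by (intro mult_left_mono) simp_all
    with b show False using shrink[of "b\<^sup>2"] by simp
  next
    case 2
    with b have "b\<^sup>2 < a\<^sup>2" using shrink[of "a\<^sup>2"] by (simp add: max_def)
    with 2 have "\<delta>\<^sup>2 * max (b\<^sup>2) (c\<^sup>2) \<le> \<delta>\<^sup>2 * a\<^sup>2" by (intro mult_left_mono) simp_all
    with a show False using shrink[of "a\<^sup>2"] by simp
  next
    case 3
    with a b have "a\<^sup>2 < (\<delta> * c)\<^sup>2" "b\<^sup>2 < (\<delta> * c)\<^sup>2" by (auto simp: max_def power_mult_distrib)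
    then have "a < \<delta> * c" "b < \<delta> * c"
      using assms(1,5) by (auto intro: power_less_imp_less_base)
    moreover have "2 * \<delta> * c \<le> c" using mult_right_mono[of "2 * \<delta>" 1 c] assms(2,5) by simp
    ultimately show False using c 3 by linarith
  qed
qed

lemma Re_mult_cnj_nonpos:
  fixes Wi Wk Wj :: complex and ci cj :: real
  assumes relation: "complex_of_real ci * Wi + Wk + complex_of_real cj * Wj = 0"
    and "0 \<le> cj" "cj \<le> 1" and "cmod Wj \<le> cmod Wk" and "0 < ci"
  shows "Re (Wi * cnj Wk) \<le> 0"
proof -
  have "Wk + complex_of_real ci * Wi = - (complex_of_real cj * Wj)"
    using relation by (simp add: algebra_simps eq_neg_iff_add_eq_0)
  then have "cmod (Wk + complex_of_real ci * Wi) = cj * cmod Wj"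
    using assms(2) by (simp add: norm_mult)
  also have "\<dots> \<le> cmod Wk"
    using assms(2-4) by (meson dual_order.trans mult_left_le_one_le norm_ge_zero)
  finally have "(cmod (Wk + complex_of_real ci * Wi))\<^sup>2 \<le> (cmod Wk)\<^sup>2"
    by (simp add: power_mono)
  moreover have "(cmod (Wk + complex_of_real ci * Wi))\<^sup>2
      = (cmod Wk)\<^sup>2 + 2 * ci * Re (Wi * cnj Wk) + ci\<^sup>2 * (cmod Wi)\<^sup>2"
    by (rule of_real_eq_iff[where 'a=complex, THEN iffD1])
      (simp only: of_real_add of_real_mult complex_norm_square of_real_Re of_real_numeral,
        simp add: algebra_simps power2_eq_square)
  ultimately have "2 * ci * Re (Wi * cnj Wk) \<le> - (ci\<^sup>2 * (cmod Wi)\<^sup>2)" by linarith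
  also have "\<dots> \<le> 0" by simp
  finally have "ci * Re (Wi * cnj Wk) \<le> 0" by simp
  with \<open>0 < ci\<close> show ?thesis by (simp add: mult_le_0_iff)
qed

lemma quotient_derivative_split:
  fixes Wi Wk Ui Uk :: complex and d e :: real
  assumes "e = d / ((cmod Wk)\<^sup>2)\<^sup>2"
  shows "Wi * complex_of_real (d * ((2 * Re (cnj Wi * Ui) * (cmod Wk)\<^sup>2
            - (cmod Wi)\<^sup>2 * (2 * Re (cnj Wk * Uk))) / ((cmod Wk)\<^sup>2)\<^sup>2))
    = complex_of_real (e * (cmod Wk)\<^sup>2 * (cmod Wi)\<^sup>2) * Ui
      + complex_of_real (e * (cmod Wk)\<^sup>2) * Wi * Wi * cnj Ui
      - complex_of_real (e * (cmod Wi)\<^sup>2) * Wi * cnj Wk * Uk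
      - complex_of_real (e * (cmod Wi)\<^sup>2) * Wi * Wk * cnj Uk"
proof -
  have real_part: "d * ((2 * Re (cnj Wi * Ui) * (cmod Wk)\<^sup>2 - (cmod Wi)\<^sup>2 * (2 * Re (cnj Wk * Uk)))
          / ((cmod Wk)\<^sup>2)\<^sup>2)
      = e * (cmod Wk)\<^sup>2 * (2 * Re (cnj Wi * Ui)) - e * (cmod Wi)\<^sup>2 * (2 * Re (cnj Wk * Uk))"
    unfolding assms by (simp add: divide_inverse algebra_simps)
  have of_real_part: "complex_of_real (e * (cmod Wk)\<^sup>2 * (2 * Re (cnj Wi * Ui))
        - e * (cmod Wi)\<^sup>2 * (2 * Re (cnj Wk * Uk)))
      = complex_of_real (e * (cmod Wk)\<^sup>2) * (cnj Wi * Ui + Wi * cnj Ui)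
        - complex_of_real (e * (cmod Wi)\<^sup>2) * (cnj Wk * Uk + Wk * cnj Uk)"
    by (simp only: of_real_diff of_real_mult of_real_numeral of_real_Re complex_cnj_mult
        complex_cnj_cnj) (simp add: field_simps)
  have weight: "complex_of_real (e * (cmod Wk)\<^sup>2 * (cmod Wi)\<^sup>2)
      = complex_of_real (e * (cmod Wk)\<^sup>2) * (Wi * cnj Wi)"
    by (simp only: of_real_mult complex_norm_square)
  show ?thesis unfolding real_part of_real_part weight by (simp add: algebra_simps)
qed

lemma norm_diff_perturbed:
  fixes ci ck cj e :: real and Wi Wk :: complex
  shows "(cmod (complex_of_real ci + complex_of_real (e * (cmod Wk)\<^sup>2 * (cmod Wi)\<^sup>2)))\<^sup>2
       + (cmod (complex_of_real ck - complex_of_real (e * (cmod Wi)\<^sup>2) * Wi * cnj Wk))\<^sup>2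
       + (cmod (complex_of_real cj))\<^sup>2
       - ((cmod (complex_of_real (e * (cmod Wk)\<^sup>2) * Wi * Wi))\<^sup>2
          + (cmod (complex_of_real (e * (cmod Wi)\<^sup>2) * Wi * Wk))\<^sup>2)
     = ci\<^sup>2 + ck\<^sup>2 + cj\<^sup>2 + 2 * e * (cmod Wi)\<^sup>2 * (ci * (cmod Wk)\<^sup>2 - ck * Re (Wi * cnj Wk))"
  by (rule of_real_eq_iff[where 'a=complex, THEN iffD1])
    (simp only: of_real_add of_real_diff of_real_mult complex_norm_square of_real_Re
      of_real_numeral, simp add: algebra_simps power2_eq_square)

locale branch_zero =
  fixes A1 A2 \<epsilon> :: real and \<gamma> :: "real \<Rightarrow> real" and t :: real and k :: nat
    and x :: "complex \<times> complex" and s0 s1 s2 :: bool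
  assumes cutoff: "cutoff A1 A2 \<epsilon> \<gamma>"
    and \<delta>_pos: "0 < A2 * \<epsilon>" and \<delta>_small: "A2 * \<epsilon> < 1/2"
    and t: "0 \<le> t" "t \<le> 1" and k: "k < 3"
    and zero: "Pt \<gamma> t (chart k x) = 0"
    and active: "branch_active s0 s1 s2 (chart k x)"
begin

abbreviation W where "W \<equiv> hcoord (chart k x)"
abbreviation M where "M \<equiv> max_others (chart k x)"
abbreviation K where "K \<equiv> branch_index s0 s1 s2"
abbreviation \<delta> where "\<delta> \<equiv> A2 * \<epsilon>"

definition q :: "nat \<Rightarrow> real" where
  "q m = (cmod (W m))\<^sup>2 / M m"

definition dq :: "nat \<Rightarrow> complex \<times> complex \<Rightarrow> real" where
  "dq m u = (2 * Re (cnj (W m) * chart_tangent k u m) * M m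
     - (cmod (W m))\<^sup>2 * (2 * Re (cnj (W (K m)) * chart_tangent k u (K m)))) / (M m)\<^sup>2"

definition c :: "nat \<Rightarrow> real" where
  "c m = gam_t \<gamma> t (q m)"

definition d :: "nat \<Rightarrow> real" where
  "d m = t * deriv \<gamma> (q m)"

definition branch_deriv :: "complex \<times> complex \<Rightarrow> complex" where
  "branch_deriv u =
     (\<Sum>m<3. complex_of_real (c m) * chart_tangent k u m + W m * complex_of_real (d m * dq m u))"

definition in_transition :: "nat \<Rightarrow> bool" where
  "in_transition m \<longleftrightarrow> d m \<noteq> 0 \<and> W m \<noteq> 0"

lemma W_k: "W k = 1"
  using hcoord_chart[OF k k] by simp

lemma cmod_W_K: "m < 3 \<Longrightarrow> (cmod (W (K m)))\<^sup>2 = M m"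
  using active unfolding branch_active_iff by blast

lemma M_pos:
  assumes "m < 3"
  shows "0 < M m"
proof (cases "m = k")
  case False
  then have "k = other1 m \<or> k = other2 m"
    using perm3_mem[OF perm3_others[OF assms] k] by auto
  then have "1 \<le> M m" unfolding max_others_def using W_k by auto
  then show ?thesis by simp
next
  case True
  show ?thesis
  proof (rule ccontr)
    assume "\<not> 0 < M m"
    with True max_others_nonneg[of "chart k x" k] have "M k = 0" by simp
    then have "W (other1 k) = 0" "W (other2 k) = 0"
      unfolding max_others_def by (simp_all add: max_def split: if_splits)
    then have "Pt \<gamma> t (chart k x) = 1"
      unfolding Pt_eq_sum sum_lessThan_3_perm3[OF perm3_others[OF k]]
      using \<open>M k = 0\<close> W_k by (simp add: Gt_def)
    with zero show False by simp
  qed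
qed

lemma coeff_relation: "(\<Sum>m<3. complex_of_real (c m) * W m) = 0"
proof -
  have "(\<Sum>m<3. complex_of_real (c m) * W m) = Pt \<gamma> t (chart k x)"
    unfolding Pt_eq_sum
  proof (rule sum.cong)
    fix m :: nat assume "m \<in> {..<3}"
    then have "M m \<noteq> 0" using M_pos by force
    then show "complex_of_real (c m) * W m
        = complex_of_real (Gt \<gamma> t ((cmod (W m))\<^sup>2) (M m)) * W m"
      by (simp add: Gt_def c_def q_def)
  qed simp
  with zero show ?thesis by simp
qed

lemma branch_has_derivative:
  "((\<lambda>y. Pbranch \<gamma> t s0 s1 s2 (chart k y)) has_derivative branch_deriv) (at x)"
proof -
  have "((\<lambda>y. complex_of_real (Gt \<gamma> t ((cmod (hcoord (chart k y) m))\<^sup>2)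
      ((cmod (hcoord (chart k y) (K m)))\<^sup>2)) * hcoord (chart k y) m) has_derivative
      (\<lambda>u. complex_of_real (c m) * chart_tangent k u m + W m * complex_of_real (d m * dq m u))) (at x)"
    if m: "m < 3" for m
  proof -
    have "W (K m) \<noteq> 0" using cmod_W_K[OF m] M_pos[OF m] by auto
    from has_derivative_Gt_mult[OF cutoff_has_real_derivative[OF cutoff]
        hcoord_chart_has_derivative[OF k m] hcoord_chart_has_derivative[OF k branch_index_less_3[OF m]]
        this, of t]
    show ?thesis unfolding cmod_W_K[OF m] c_def d_def q_def dq_def .
  qed
  then show ?thesis unfolding Pbranch_eq_sum branch_deriv_def
    by (intro has_derivative_sum) simp
qed

lemma c_range: "0 \<le> c m \<and> c m \<le> 1"
proof -
  have "0 \<le> q m" unfolding q_def using max_others_nonneg by simp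
  then show ?thesis unfolding c_def by (rule gam_t_range[OF cutoff t])
qed

lemma c_eq_1:
  assumes "m < 3" and "M m \<le> (cmod (W m))\<^sup>2"
  shows "c m = 1"
proof -
  have "\<delta>\<^sup>2 \<le> 1" using \<delta>_pos \<delta>_small by (simp add: power_le_one)
  also have "1 \<le> q m" unfolding q_def using assms M_pos[OF assms(1)] by simp
  finally show ?thesis unfolding c_def using gam_t_eq_1[OF cutoff] \<delta>_pos by simp
qed

lemma ex_c_eq_1: "\<exists>m<3. c m = 1"
proof -
  let ?f = "\<lambda>n. (cmod (W n))\<^sup>2"
  have "Max (?f ` {..<3}) \<in> ?f ` {..<3}" by (intro Max_in) (auto simp: lessThan_empty_iff)
  then obtain m where "m \<in> {..<3}" "Max (?f ` {..<3}) = ?f m" by (rule imageE)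
  then have m: "m < 3" "?f m = Max (?f ` {..<3})" by simp_all
  have le: "?f n \<le> ?f m" if "n < 3" for n
    unfolding m(2) by (rule Max_ge) (use that in auto)
  have "other1 m < 3" "other2 m < 3"
    using perm3_others[OF m(1)] unfolding perm3_def by auto
  then have "M m \<le> ?f m"
    unfolding max_others_def using le by simp
  with m(1) show ?thesis using c_eq_1 by blast
qed

lemma d_nonneg: "m < 3 \<Longrightarrow> W m \<noteq> 0 \<Longrightarrow> 0 \<le> d m"
proof -
  assume "m < 3" "W m \<noteq> 0"
  then have "0 < q m" unfolding q_def using M_pos by simp
  then show "0 \<le> d m" unfolding d_def using cutoff_deriv_nonneg[OF cutoff] t by simp
qed

lemma in_transition_small:
  assumes "m < 3" and "in_transition m"
  shows "(cmod (W m))\<^sup>2 < \<delta>\<^sup>2 * M m" and "0 < c m"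
proof -
  have "0 < q m" "deriv \<gamma> (q m) \<noteq> 0"
    using assms M_pos[OF assms(1)] unfolding in_transition_def d_def q_def by auto
  then have "q m < \<delta>\<^sup>2"
    using cutoff_deriv_ne_0_imp_less[OF cutoff] \<delta>_pos by simp
  then show "(cmod (W m))\<^sup>2 < \<delta>\<^sup>2 * M m"
    using M_pos[OF assms(1)] by (simp add: q_def divide_less_eq)
  show "0 < c m"
    unfolding c_def using gam_t_pos_if_deriv_ne_0[OF cutoff t] \<open>0 < q m\<close> \<open>deriv \<gamma> (q m) \<noteq> 0\<close> .
qed

lemma in_transition_unique:
  assumes "i < 3" "i' < 3" "in_transition i" "in_transition i'"
  shows "i = i'"
proof (rule ccontr)
  assume "i \<noteq> i'"
  define j where "j = 3 - i - i'"
  have perm: "perm3 i i' j" unfolding j_def using perm3_third assms(1,2) \<open>i \<noteq> i'\<close> by blast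
  then have "perm3 i' i j" "perm3 j i i'" unfolding perm3_def by auto
  have small_i: "(cmod (W i))\<^sup>2 < \<delta>\<^sup>2 * max ((cmod (W i'))\<^sup>2) ((cmod (W j))\<^sup>2)"
    using in_transition_small(1)[OF assms(1,3)] max_others_perm3[OF perm] by simp
  have small_i': "(cmod (W i'))\<^sup>2 < \<delta>\<^sup>2 * max ((cmod (W i))\<^sup>2) ((cmod (W j))\<^sup>2)"
    using in_transition_small(1)[OF assms(2,4)] max_others_perm3[OF \<open>perm3 i' i j\<close>] by simp
  have "cmod (W j) \<le> cmod (W i) + cmod (W i')"
    if "(cmod (W i))\<^sup>2 \<le> (cmod (W j))\<^sup>2" "(cmod (W i'))\<^sup>2 \<le> (cmod (W j))\<^sup>2"
  proof -
    have "c j = 1"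
      using c_eq_1 max_others_perm3[OF \<open>perm3 j i i'\<close>] that perm unfolding perm3_def by simp
    with coeff_relation have "W j = - (complex_of_real (c i) * W i + complex_of_real (c i') * W i')"
      unfolding sum_lessThan_3_perm3[OF perm] by (simp add: eq_neg_iff_add_eq_0 algebra_simps)
    then have "cmod (W j) \<le> cmod (complex_of_real (c i) * W i) + cmod (complex_of_real (c i') * W i')"
      by (simp only: norm_minus_cancel norm_triangle_ineq)
    also have "\<dots> \<le> cmod (W i) + cmod (W i')"
      using c_range[of i] c_range[of i'] by (intro add_mono) (auto simp: norm_mult mult_left_le_one_le)
    finally show ?thesis .
  qed
  with no_two_small_of_three[OF \<delta>_pos \<delta>_small norm_ge_zero norm_ge_zero norm_ge_zero small_i small_i']
  show False by blast
qed

lemma ex_transition_index: "\<exists>i<3. \<forall>m<3. m \<noteq> i \<longrightarrow> \<not> in_transition m"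
  using in_transition_unique by (metis zero_less_numeral)

end

text \<open>\<open>i\<close> is the only coordinate that may lie in the transition region of the cutoff, and
  \<open>l\<close> the coordinate realising \<open>M i\<close>; \<open>A\<close> and \<open>B\<close> are the coefficients of the
  differential of the branch with respect to \<open>dW\<close> and \<open>d(cnj W)\<close>.\<close>
locale transition_index = branch_zero +
  fixes i :: nat
  assumes i: "i < 3" and not_in_transition: "\<And>m. m < 3 \<Longrightarrow> m \<noteq> i \<Longrightarrow> \<not> in_transition m"
begin

definition l :: nat where
  "l = K i"

definition j :: nat where
  "j = 3 - i - l"

definition e :: real where
  "e = d i / (M i)\<^sup>2"

definition A :: "nat \<Rightarrow> complex" where
  "A n = complex_of_real (c n)
     + (if n = i then complex_of_real (e * (cmod (W l))\<^sup>2 * (cmod (W i))\<^sup>2) else 0)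
     - (if n = l then complex_of_real (e * (cmod (W i))\<^sup>2) * W i * cnj (W l) else 0)"

definition B :: "nat \<Rightarrow> complex" where
  "B n = (if n = i then complex_of_real (e * (cmod (W l))\<^sup>2) * W i * W i else 0)
     - (if n = l then complex_of_real (e * (cmod (W i))\<^sup>2) * W i * W l else 0)"

lemma perm3_i_l_j: "perm3 i l j"
  unfolding j_def l_def using perm3_third i branch_index_less_3 branch_index_neq by metis

lemma M_i: "M i = (cmod (W l))\<^sup>2"
  unfolding l_def using cmod_W_K[OF i] by simp

lemma A_simps:
  "A i = complex_of_real (c i) + complex_of_real (e * (cmod (W l))\<^sup>2 * (cmod (W i))\<^sup>2)"
  "A l = complex_of_real (c l) - complex_of_real (e * (cmod (W i))\<^sup>2) * W i * cnj (W l)"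
  "A j = complex_of_real (c j)"
  using perm3_i_l_j unfolding A_def perm3_def by auto

lemma B_simps:
  "B i = complex_of_real (e * (cmod (W l))\<^sup>2) * W i * W i"
  "B l = - (complex_of_real (e * (cmod (W i))\<^sup>2) * W i * W l)"
  "B j = 0"
  using perm3_i_l_j unfolding B_def perm3_def by auto

lemma branch_deriv_eq:
  "branch_deriv u = (\<Sum>n<3. A n * chart_tangent k u n + B n * cnj (chart_tangent k u n))"
proof -
  have vanish: "W m * complex_of_real (d m * dq m u) = 0" if "m < 3" "m \<noteq> i" for m
    using not_in_transition[OF that] unfolding in_transition_def by auto
  have "W l * complex_of_real (d l * dq l u) = 0" "W j * complex_of_real (d j * dq j u) = 0"
    using perm3_i_l_j vanish unfolding perm3_def by auto
  moreover have "W i * complex_of_real (d i * dq i u)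
    = complex_of_real (e * (cmod (W l))\<^sup>2 * (cmod (W i))\<^sup>2) * chart_tangent k u i
      + complex_of_real (e * (cmod (W l))\<^sup>2) * W i * W i * cnj (chart_tangent k u i)
      - complex_of_real (e * (cmod (W i))\<^sup>2) * W i * cnj (W l) * chart_tangent k u l
      - complex_of_real (e * (cmod (W i))\<^sup>2) * W i * W l * cnj (chart_tangent k u l)"
    unfolding dq_def l_def[symmetric] M_i by (rule quotient_derivative_split[OF e_def[unfolded M_i]])
  ultimately show ?thesis
    unfolding branch_deriv_def sum_lessThan_3_perm3[OF perm3_i_l_j] A_simps B_simps
    by (simp only:) (simp add: algebra_simps)
qed

lemma A_orth: "(\<Sum>n<3. A n * W n) = 0"
proof -
  have "(\<Sum>n<3. A n * W n) = (\<Sum>n<3. complex_of_real (c n) * W n)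
      + (complex_of_real (e * (cmod (W l))\<^sup>2 * (cmod (W i))\<^sup>2) * W i
         - complex_of_real (e * (cmod (W i))\<^sup>2) * W i * cnj (W l) * W l)"
    unfolding sum_lessThan_3_perm3[OF perm3_i_l_j] A_simps by (simp add: algebra_simps)
  also have "complex_of_real (e * (cmod (W l))\<^sup>2 * (cmod (W i))\<^sup>2) * W i
      - complex_of_real (e * (cmod (W i))\<^sup>2) * W i * cnj (W l) * W l = 0"
    by (simp only: of_real_mult complex_norm_square) (simp add: algebra_simps)
  finally show ?thesis using coeff_relation by simp
qed

lemma B_orth: "(\<Sum>n<3. B n * cnj (W n)) = 0"
proof -
  have "complex_of_real (e * (cmod (W l))\<^sup>2) * W i * W i * cnj (W i)
      = complex_of_real (e * (cmod (W i))\<^sup>2) * W i * W l * cnj (W l)"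
    by (simp only: of_real_mult complex_norm_square) (simp add: algebra_simps)
  then show ?thesis
    unfolding sum_lessThan_3_perm3[OF perm3_i_l_j] B_simps by (simp add: algebra_simps)
qed

lemma sum_c_squared_ge_1: "1 \<le> (c i)\<^sup>2 + (c l)\<^sup>2 + (c j)\<^sup>2"
proof -
  obtain m where "m < 3" "c m = 1" using ex_c_eq_1 by blast
  then have "(c i)\<^sup>2 = 1 \<or> (c l)\<^sup>2 = 1 \<or> (c j)\<^sup>2 = 1"
    using perm3_mem[OF perm3_i_l_j \<open>m < 3\<close>] by auto
  then show ?thesis
    using zero_le_power2[of "c i"] zero_le_power2[of "c l"] zero_le_power2[of "c j"] by linarith
qed

lemma correction_nonneg:
  "0 \<le> e * (cmod (W i))\<^sup>2 * (c i * (cmod (W l))\<^sup>2 - c l * Re (W i * cnj (W l)))"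
proof (cases "in_transition i")
  case False
  then have "e = 0 \<or> W i = 0" unfolding in_transition_def e_def by auto
  then show ?thesis by auto
next
  case True
  then have "W i \<noteq> 0" unfolding in_transition_def by simp
  then have "0 \<le> e" unfolding e_def using d_nonneg[OF i] by simp
  have "(cmod (W i))\<^sup>2 < \<delta>\<^sup>2 * M i" "0 < c i"
    using in_transition_small[OF i True] by auto
  moreover have "\<delta>\<^sup>2 * M i \<le> M i"
    using mult_right_mono[of "\<delta>\<^sup>2" 1 "M i"] max_others_nonneg \<delta>_pos \<delta>_small
    by (simp add: power_le_one)
  ultimately have "(cmod (W i))\<^sup>2 \<le> (cmod (W l))\<^sup>2" using M_i by linarith
  moreover have "(cmod (W j))\<^sup>2 \<le> (cmod (W l))\<^sup>2"
    using max_others_perm3[OF perm3_i_l_j] M_i by (metis max.cobounded2)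
  moreover have "perm3 l i j" using perm3_i_l_j unfolding perm3_def by auto
  ultimately have "c l = 1"
    using c_eq_1[of l] max_others_perm3[of l i j] unfolding perm3_def by simp
  with coeff_relation have "complex_of_real (c i) * W i + W l + complex_of_real (c j) * W j = 0"
    unfolding sum_lessThan_3_perm3[OF perm3_i_l_j] by simp
  then have "Re (W i * cnj (W l)) \<le> 0"
    using Re_mult_cnj_nonpos c_range[of j] \<open>0 < c i\<close>
      power2_le_imp_le[OF \<open>(cmod (W j))\<^sup>2 \<le> (cmod (W l))\<^sup>2\<close> norm_ge_zero]
    by blast
  moreover have "0 \<le> c i * (cmod (W l))\<^sup>2" using \<open>0 < c i\<close> by simp
  ultimately have "0 \<le> c i * (cmod (W l))\<^sup>2 - c l * Re (W i * cnj (W l))"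
    using \<open>c l = 1\<close> by simp
  with \<open>0 \<le> e\<close> show ?thesis by (intro mult_nonneg_nonneg) simp_all
qed

lemma norms_differ: "(\<Sum>n<3. (cmod (A n))\<^sup>2) \<noteq> (\<Sum>n<3. (cmod (B n))\<^sup>2)"
proof -
  have "(\<Sum>n<3. (cmod (A n))\<^sup>2) - (\<Sum>n<3. (cmod (B n))\<^sup>2)
      = (c i)\<^sup>2 + (c l)\<^sup>2 + (c j)\<^sup>2
        + 2 * (e * (cmod (W i))\<^sup>2 * (c i * (cmod (W l))\<^sup>2 - c l * Re (W i * cnj (W l))))"
    using norm_diff_perturbed[of "c i" e "W l" "W i" "c l" "c j"]
    unfolding sum_lessThan_3_perm3[OF perm3_i_l_j] A_simps B_simps norm_minus_cancel
    by (simp add: mult.assoc)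
  then show ?thesis using sum_c_squared_ge_1 correction_nonneg by simp
qed

lemma surj_nondeg_branch_deriv: "surj branch_deriv \<and> nondeg_on x {v. branch_deriv v = 0}"
  using surj_nondeg_kernel[OF k branch_deriv_eq A_orth B_orth norms_differ] .

end

context branch_zero
begin

lemma branch_symplectic:
  "\<exists>D. ((\<lambda>y. Pbranch \<gamma> t s0 s1 s2 (chart k y)) has_derivative D) (at x)
     \<and> surj D \<and> nondeg_on x {v. D v = 0}"
proof -
  obtain i where "i < 3" "\<forall>m<3. m \<noteq> i \<longrightarrow> \<not> in_transition m"
    using ex_transition_index by blast
  then interpret transition_index A1 A2 \<epsilon> \<gamma> t k x s0 s1 s2 i
    by unfold_locales auto
  show ?thesis using branch_has_derivative surj_nondeg_branch_deriv by blast
qed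

end

lemma symplectic_curve_chart_if_small:
  assumes "cutoff A1 A2 \<epsilon> \<gamma>" and "0 < A2 * \<epsilon>" "A2 * \<epsilon> < 1/2"
    and "0 \<le> t" "t \<le> 1" and "k < 3"
  shows "symplectic_curve_chart \<gamma> t k"
  unfolding symplectic_curve_chart_def
proof (intro allI impI)
  fix x s0 s1 s2
  assume "Pt \<gamma> t (chart k x) = 0" and "branch_active s0 s1 s2 (chart k x)"
  with assms interpret branch_zero A1 A2 \<epsilon> \<gamma> t k x s0 s1 s2
    by unfold_locales
  show "\<exists>D. ((\<lambda>y. Pbranch \<gamma> t s0 s1 s2 (chart k y)) has_derivative D) (at x)
      \<and> surj D \<and> nondeg_on x {v. D v = 0}"
    by (rule branch_symplectic)
qed

theorem proposition5p1:
  fixes A1 A2 :: real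
  assumes "1 < A1" and "A1 < A2"
  shows "\<exists>\<epsilon>0>0. \<forall>\<epsilon>. 0 < \<epsilon> \<and> \<epsilon> < \<epsilon>0 \<longrightarrow>
           (\<forall>\<gamma>. cutoff A1 A2 \<epsilon> \<gamma> \<longrightarrow>
              (\<forall>t\<in>{0..1}. \<forall>k\<in>{0, 1, 2::nat}. symplectic_curve_chart \<gamma> t k))"
proof (intro exI[of _ "1 / (2 * A2)"] conjI allI impI ballI)
  have "0 < A2" using assms by simp
  then show "0 < 1 / (2 * A2)" by simp
  fix \<epsilon> t :: real and \<gamma> :: "real \<Rightarrow> real" and k :: nat
  assume "0 < \<epsilon> \<and> \<epsilon> < 1 / (2 * A2)" and "cutoff A1 A2 \<epsilon> \<gamma>"
    and "t \<in> {0..1}" and "k \<in> {0, 1, 2}"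
  moreover from this \<open>0 < A2\<close> have "0 < A2 * \<epsilon>" "A2 * \<epsilon> < 1/2"
    by (auto simp: field_simps)
  ultimately show "symplectic_curve_chart \<gamma> t k"
    by (intro symplectic_curve_chart_if_small) auto
qed

end
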